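(* Let $m\ge3$, $C$ a set of $m$ candidates, $T$ the set of all $m!$ strict rankings of $C$, and $w=(w_1,\dots,w_m)$ with $1=w_1\ge\cdots\ge w_m=0$; for $t\in T$, $\alpha\in C$ let $\sigma_t(\alpha)=w_i$ where $i$ is the position of $\alpha$ in $t$. Suppose $n$ voters each independently choose a ranking uniformly from $T$, let $N_t$ be the number choosing $t$, and $|\alpha|=\sum_t N_t\sigma_t(\alpha)$. Let $$K=\begin{cases}2\,m!\,(1-w_{m-1})^{-1}, & w_{m-1}<1,\\ 0, & w_{m-1}=1.\end{cases}$$ Then with probability 1 the following holds: if some candidate $a$ satisfies $|a|>|\alpha|$ for all $\alpha\ne a$, then for every $\beta\neq a$, $$Q_1(\beta)\le Q_2(\beta)+K,$$ where $Q_1(\beta)$ and $Q_2(\beta)$ are defined as follows. Let $\bar T_{\beta a}$ be the set of types ranking $\beta$ above $a$, and $T_\beta$ the set of types ranking $\beta$ first. $Q_1(\beta)$ is the optimal value (or $+\infty$ if infeasible) of the integer linear program: minimize $\sum_{t\in\bar T_{\beta a}}x_t$ subject to $$\sum_{t\in T_\beta}y_t(1-\sigma_t(\alpha))-\sum_{t\in\bar T_{\beta a}}x_t(\sigma_t(\beta)-\sigma_t(\alpha))\ge |\alpha|-|\beta|\quad\forall\alpha\ne\beta,$$ $\sum_{t\in T_\beta}y_t=\sum_{t\in\bar T_{\beta a}}x_t$, $0\le x_t\le N_t$ for $t\in\bar T_{\beta a}$, $y_t\ge0$ for $t\in T_\beta$, and all $x_t,y_t$ integers. $Q_2(\beta)$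 is the optimal value (or $+\infty$ if infeasible) of the same program with the integrality constraints removed and the constraint $0\le x_t\le N_t$ replaced by $0\le x_t\le N_t-K$.
   Context: Voters' rankings ("types") are drawn under the Impartial Culture model: each of the $n$ voters independently picks one of the $m!$ rankings with equal probability. *)

theory Defs
  imports "HOL-Probability.Probability" "HOL-Combinatorics.Multiset_Permutations"
begin

text \<open>A type (strict ranking) is a list listing all candidates of C exactly once,
  most preferred first.  The position of a candidate is its (0-based) list index.\<close>

definition rankings :: "'a set \<Rightarrow> 'a list set" where
  "rankings C = permutations_of_set C"

definition pos :: "'a list \<Rightarrow> 'a \<Rightarrow> nat" where
  "pos t \<alpha> = (LEAST i. t ! i = \<alpha>)"

definition sigma :: "(nat \<Rightarrow> real) \<Rightarrow> 'a list \<Rightarrow> 'a \<Rightarrow> real" where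
  "sigma w t \<alpha> = w (pos t \<alpha> + 1)"

definition type_count :: "nat \<Rightarrow> (nat \<Rightarrow> 'a list) \<Rightarrow> 'a list \<Rightarrow> nat" where
  "type_count n prof t = card {i \<in> {..<n}. prof i = t}"

definition score :: "'a set \<Rightarrow> (nat \<Rightarrow> real) \<Rightarrow> ('a list \<Rightarrow> nat) \<Rightarrow> 'a \<Rightarrow> real" where
  "score C w N \<alpha> = (\<Sum>t\<in>rankings C. real (N t) * sigma w t \<alpha>)"

definition Kconst :: "nat \<Rightarrow> (nat \<Rightarrow> real) \<Rightarrow> real" where
  "Kconst m w = (if w (m - 1) < 1 then 2 * fact m / (1 - w (m - 1)) else 0)"

definition above :: "'a set \<Rightarrow> 'a \<Rightarrow> 'a \<Rightarrow> 'a list set" where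
  "above C \<beta> a = {t \<in> rankings C. pos t \<beta> < pos t a}"

definition first :: "'a set \<Rightarrow> 'a \<Rightarrow> 'a list set" where
  "first C \<beta> = {t \<in> rankings C. pos t \<beta> = 0}"

definition lp_feasible ::
  "'a set \<Rightarrow> (nat \<Rightarrow> real) \<Rightarrow> ('a list \<Rightarrow> nat) \<Rightarrow> 'a \<Rightarrow> 'a \<Rightarrow> real \<Rightarrow> bool
    \<Rightarrow> ('a list \<Rightarrow> real) \<Rightarrow> ('a list \<Rightarrow> real) \<Rightarrow> bool" where
  "lp_feasible C w N a \<beta> bnd intg x y \<longleftrightarrow>
     (\<forall>\<alpha>\<in>C - {\<beta>}.
        (\<Sum>t\<in>first C \<beta>. y t * (1 - sigma w t \<alpha>))
        - (\<Sum>t\<in>above C \<beta> a. x t * (sigma w t \<beta> - sigma w t \<alpha>))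
        \<ge> score C w N \<alpha> - score C w N \<beta>) \<and>
     (\<Sum>t\<in>first C \<beta>. y t) = (\<Sum>t\<in>above C \<beta> a. x t) \<and>
     (\<forall>t\<in>above C \<beta> a. 0 \<le> x t \<and> x t \<le> real (N t) - bnd) \<and>
     (\<forall>t\<in>first C \<beta>. 0 \<le> y t) \<and>
     (intg \<longrightarrow> (\<forall>t\<in>above C \<beta> a. x t \<in> \<int>) \<and> (\<forall>t\<in>first C \<beta>. y t \<in> \<int>))"

text \<open>Optimal value of the minimisation program (+infinity if infeasible).\<close>
definition lp_value ::
  "'a set \<Rightarrow> (nat \<Rightarrow> real) \<Rightarrow> ('a list \<Rightarrow> nat) \<Rightarrow> 'a \<Rightarrow> 'a \<Rightarrow> real \<Rightarrow> bool \<Rightarrow> ereal" where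
  "lp_value C w N a \<beta> bnd intg =
     Inf {ereal (\<Sum>t\<in>above C \<beta> a. x t) | x y. lp_feasible C w N a \<beta> bnd intg x y}"

definition Q1 :: "'a set \<Rightarrow> (nat \<Rightarrow> real) \<Rightarrow> ('a list \<Rightarrow> nat) \<Rightarrow> 'a \<Rightarrow> 'a \<Rightarrow> ereal" where
  "Q1 C w N a \<beta> = lp_value C w N a \<beta> 0 True"

definition Q2 :: "'a set \<Rightarrow> (nat \<Rightarrow> real) \<Rightarrow> ('a list \<Rightarrow> nat) \<Rightarrow> real \<Rightarrow> 'a \<Rightarrow> 'a \<Rightarrow> ereal" where
  "Q2 C w N K a \<beta> = lp_value C w N a \<beta> K False"

definition IC_profile :: "'a set \<Rightarrow> nat \<Rightarrow> (nat \<Rightarrow> 'a list) pmf" where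
  "IC_profile C n = Pi_pmf {..<n} [] (\<lambda>_. pmf_of_set (rankings C))"

end

theory Submission
  imports Defs
begin

text \<open>Every feasible solution \<open>(x, y)\<close> of the relaxed program is rounded to an integral solution of
  the original one whose objective is larger by at most \<open>K\<close>.

  If \<open>w (m - 1) < 1\<close>, round every \<open>x t\<close> up and send the excess fraction of voters of type \<open>t\<close>
  to the type obtained from \<open>t\<close> by swapping \<open>\<beta>\<close> with the top candidate; this never decreases
  \<open>|\<beta>| - |\<alpha>|\<close>. Then round every \<open>y t\<close> down. This loses an integral number \<open>r < m!\<close> of voters,
  which are restored on the type \<open>\<beta> # p @ [a]\<close> together with \<open>\<lceil>r / (1 - w (m - 1))\<rceil>\<close> voters
  moved from \<open>p @ [\<beta>, a]\<close>, each of whom raises \<open>|\<beta>| - |\<alpha>|\<close> by at least \<open>1 - w (m - 1)\<close>. Each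
  rounding adds at most \<open>m! / (1 - w (m - 1)) = K / 2\<close> to the objective, and the slack \<open>K\<close> in the
  bounds \<open>x t \<le> N t - K\<close> leaves room for the moved voters.

  If \<open>w (m - 1) = 1\<close>, then \<open>sigma w t \<alpha>\<close> is \<open>0\<close> or \<open>1\<close> according as \<open>\<alpha>\<close> is ranked last in \<open>t\<close> or not,
  the constraints split into one integral constraint per last-ranked candidate, and an integral
  solution with no larger objective exists (here \<open>K = 0\<close>).\<close>

lemma rankings_iff: "t \<in> rankings C \<longleftrightarrow> set t = C \<and> distinct t"
  by (simp add: rankings_def permutations_of_set_def)

lemma pos_nth: "distinct t \<Longrightarrow> i < length t \<Longrightarrow> pos t (t ! i) = i"
  unfolding pos_def
proof (rule Least_equality)
  fix j assume "distinct t" "i < length t" "t ! j = t ! i"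
  then show "i \<le> j"
    by (cases "j < length t") (auto simp: nth_eq_iff_index_eq)
qed auto

lemma nth_pos:
  assumes "x \<in> set t"
  shows "pos t x < length t" and "t ! pos t x = x"
proof -
  obtain i where i: "i < length t" "t ! i = x"
    using assms by (auto simp: in_set_conv_nth)
  then have "t ! pos t x = x" "pos t x \<le> i"
    unfolding pos_def by (metis (mono_tags) LeastI, metis (mono_tags) Least_le)
  with i show "pos t x < length t" "t ! pos t x = x" by auto
qed

lemma pos_map: "inj f \<Longrightarrow> distinct s \<Longrightarrow> y \<in> set s \<Longrightarrow> pos (map f s) (f y) = pos s y"
  using pos_nth[of "map f s" "pos s y"] nth_pos[of y s] by (simp add: distinct_map inj_on_subset)

lemma sigma_nth: "distinct t \<Longrightarrow> i < length t \<Longrightarrow> sigma w t (t ! i) = w (Suc i)"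
  by (simp add: sigma_def pos_nth)

lemma bounded_nat_split:
  fixes c :: "'i \<Rightarrow> nat"
  assumes "finite S" and "k \<le> (\<Sum>i\<in>S. c i)"
  obtains v where "\<And>i. i \<in> S \<Longrightarrow> v i \<le> c i" and "(\<Sum>i\<in>S. v i) = k"
proof -
  from assms have "\<exists>v. (\<forall>i\<in>S. v i \<le> c i) \<and> (\<Sum>i\<in>S. v i) = k"
  proof (induction S arbitrary: k rule: finite_induct)
    case (insert i S)
    define j where "j = min k (\<Sum>i\<in>S. c i)"
    obtain v where v: "\<forall>i\<in>S. v i \<le> c i" "(\<Sum>i\<in>S. v i) = j"
      using insert.IH[of j] by (auto simp: j_def)
    have "(\<Sum>s\<in>S. (v(i := k - j)) s) = j"
      using v insert.hyps by (auto intro!: sum.cong)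
    moreover have "k - j \<le> c i"
      using insert.prems insert.hyps by (auto simp: j_def)
    ultimately show ?case
      using v insert.hyps by (auto simp: j_def intro!: exI[of _ "v(i := k - j)"])
  qed simp
  then show ?thesis using that by blast
qed

lemma bounded_nat_split_grouped:
  fixes c :: "'i \<Rightarrow> nat" and v :: "'g \<Rightarrow> nat"
  assumes "finite S" and v_le: "\<And>g. g \<in> G \<Longrightarrow> v g \<le> (\<Sum>i\<in>{i \<in> S. f i = g}. c i)"
  obtains u where "\<And>i. i \<in> S \<Longrightarrow> u i \<le> c i"
    and "\<And>g. g \<in> G \<Longrightarrow> (\<Sum>i\<in>{i \<in> S. f i = g}. u i) = v g"
proof -
  have "\<forall>g\<in>G. \<exists>u. (\<forall>i\<in>{i \<in> S. f i = g}. u i \<le> c i) \<and> (\<Sum>i\<in>{i \<in> S. f i = g}. u i) = v g"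
  proof
    fix g assume "g \<in> G"
    from \<open>finite S\<close> v_le[OF this] show "\<exists>u. (\<forall>i\<in>{i \<in> S. f i = g}. u i \<le> c i) \<and> (\<Sum>i\<in>{i \<in> S. f i = g}. u i) = v g"
      by (elim bounded_nat_split[rotated]) auto
  qed
  then obtain U where U: "\<And>g. g \<in> G \<Longrightarrow>
      (\<forall>i\<in>{i \<in> S. f i = g}. U g i \<le> c i) \<and> (\<Sum>i\<in>{i \<in> S. f i = g}. U g i) = v g"
    by metis
  define u where "u i = (if f i \<in> G then U (f i) i else 0)" for i
  show thesis
  proof
    show "u i \<le> c i" if "i \<in> S" for i
      using U[of "f i"] that by (auto simp: u_def)
    show "(\<Sum>i\<in>{i \<in> S. f i = g}. u i) = v g" if "g \<in> G" for g
      using U[OF that] that by (auto simp: u_def intro: sum.cong)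
  qed
qed

text \<open>The integral solution is \<open>X g = v g\<close>, \<open>Y g = nat (d g)\<close>: the positive demands \<open>d g\<close> are
  covered by the slack \<open>min (X g) (- d g)\<close> of the groups with \<open>d g \<le> 0\<close>.\<close>
lemma integral_cover_split:
  fixes X Y :: "'g \<Rightarrow> real" and d :: "'g \<Rightarrow> int" and M :: "'g \<Rightarrow> nat"
  assumes "finite G"
    and bounds: "\<And>g. g \<in> G \<Longrightarrow> 0 \<le> X g \<and> X g \<le> M g \<and> 0 \<le> Y g \<and> d g \<le> Y g - X g"
    and sum_le: "(\<Sum>g\<in>G. Y g) \<le> (\<Sum>g\<in>G. X g)"
  obtains v :: "'g \<Rightarrow> nat"
  where "\<And>g. g \<in> G \<Longrightarrow> v g \<le> M g \<and> v g \<le> nat (- d g)"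
    and "(\<Sum>g\<in>G. v g) = (\<Sum>g\<in>G. nat (d g))"
    and "(\<Sum>g\<in>G. real (v g)) \<le> (\<Sum>g\<in>G. X g)"
proof -
  define slack where "slack g = min (X g) (real (nat (- d g)))" for g
  have "real (nat (d g)) \<le> slack g + (Y g - X g)" if "g \<in> G" for g
    using bounds[OF that] by (auto simp: slack_def min_def)
  then have "(\<Sum>g\<in>G. real (nat (d g))) \<le> (\<Sum>g\<in>G. slack g + (Y g - X g))"
    by (rule sum_mono)
  then have "(\<Sum>g\<in>G. real (nat (d g))) \<le> (\<Sum>g\<in>G. slack g) + ((\<Sum>g\<in>G. Y g) - (\<Sum>g\<in>G. X g))"
    by (simp add: sum.distrib sum_subtractf)
  with sum_le have demand_le_slack: "(\<Sum>g\<in>G. real (nat (d g))) \<le> (\<Sum>g\<in>G. slack g)"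
    by linarith
  also have "\<dots> \<le> (\<Sum>g\<in>G. real (min (M g) (nat (- d g))))"
    using bounds by (intro sum_mono) (force simp: slack_def of_nat_min intro: min.mono)
  finally have "(\<Sum>g\<in>G. nat (d g)) \<le> (\<Sum>g\<in>G. min (M g) (nat (- d g)))"
    by (simp flip: of_nat_sum)
  then obtain v where v: "\<And>g. g \<in> G \<Longrightarrow> v g \<le> min (M g) (nat (- d g))"
    and sum_v: "(\<Sum>g\<in>G. v g) = (\<Sum>g\<in>G. nat (d g))"
    using bounded_nat_split[OF \<open>finite G\<close>] by blast
  have "(\<Sum>g\<in>G. real (v g)) = (\<Sum>g\<in>G. real (nat (d g)))"
    by (simp flip: of_nat_sum add: sum_v)
  also have "\<dots> \<le> (\<Sum>g\<in>G. X g)"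
    using demand_le_slack sum_mono[of G slack X] by (auto simp: slack_def)
  finally show ?thesis
    using v sum_v by (intro that) auto
qed

lemma sum_frac_bounds:
  fixes y :: "'i \<Rightarrow> real"
  assumes "finite S" and "S \<noteq> {}" and "(\<Sum>s\<in>S. y s) \<in> \<int>"
  shows "(\<Sum>s\<in>S. y s - \<lfloor>y s\<rfloor>) \<in> \<int>"
    and "(\<Sum>s\<in>S. y s - \<lfloor>y s\<rfloor>) \<le> real (card S) - 1"
proof -
  show "(\<Sum>s\<in>S. y s - \<lfloor>y s\<rfloor>) \<in> \<int>"
    using assms(3) by (auto simp: sum_subtractf intro!: Ints_diff Ints_sum)
  then obtain k where k: "(\<Sum>s\<in>S. y s - \<lfloor>y s\<rfloor>) = of_int k"
    using Ints_cases by blast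
  have "(\<Sum>s\<in>S. y s - \<lfloor>y s\<rfloor>) < (\<Sum>s\<in>S. 1)"
    using assms(1,2) by (intro sum_strict_mono) (auto, linarith)
  with k have "real_of_int k < real_of_int (int (card S))"
    by simp
  then have "real_of_int k \<le> real_of_int (int (card S) - 1)"
    by (simp only: of_int_less_iff of_int_le_iff)
  with k show "(\<Sum>s\<in>S. y s - \<lfloor>y s\<rfloor>) \<le> real (card S) - 1"
    by simp
qed

lemma nat_ceiling_div_bounds:
  fixes r q F :: real
  assumes "0 \<le> r" and "r \<le> F - 1" and "0 < q" and "q \<le> 1"
  shows "r \<le> real (nat \<lceil>r / q\<rceil>) * q" and "real (nat \<lceil>r / q\<rceil>) \<le> F / q"
proof -
  have "0 \<le> r / q"
    using assms by simp
  then have ceil: "r / q \<le> real (nat \<lceil>r / q\<rceil>)" "real (nat \<lceil>r / q\<rceil>) < r / q + 1"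
    using ceiling_correct[of "r / q"] by (auto simp: of_nat_nat)
  then show "r \<le> real (nat \<lceil>r / q\<rceil>) * q"
    using pos_divide_le_eq[OF \<open>0 < q\<close>] by blast
  have "r / q + 1 \<le> (F - 1) / q + 1 / q"
    using assms by (intro add_mono divide_right_mono) auto
  with ceil show "real (nat \<lceil>r / q\<rceil>) \<le> F / q"
    by (simp add: diff_divide_distrib)
qed

lemma sum_point_mass:
  fixes f :: "'i \<Rightarrow> 'b::semiring_0"
  assumes "finite S" and "s \<in> S"
  shows "(\<Sum>t\<in>S. (if t = s then k else 0) * f t) = k * f s"
proof -
  have "(\<Sum>t\<in>S. (if t = s then k else 0) * f t) = (\<Sum>t\<in>S. if t = s then k * f t else 0)"
    by (rule sum.cong) auto
  then show ?thesis
    using assms by simp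
qed

lemma of_int_ceiling_add_le: "x + real k \<le> real n \<Longrightarrow> real_of_int \<lceil>x\<rceil> + real k \<le> real n"
proof -
  assume "x + real k \<le> real n"
  then have "\<lceil>x + of_int (int k)\<rceil> \<le> int n"
    by (simp add: ceiling_le_iff)
  then show ?thesis
    by (metis ceiling_add_of_int of_int_add of_int_le_iff of_int_of_nat_eq)
qed

text \<open>The left-hand side of the score constraints: the change of \<open>|\<beta>| - |\<alpha>|\<close> when \<open>x t\<close> voters
  leave each type \<open>t \<in> above C \<beta> a\<close> and \<open>y t\<close> voters join each type \<open>t \<in> first C \<beta>\<close>.\<close>
definition relative_gain ::
  "'a set \<Rightarrow> (nat \<Rightarrow> real) \<Rightarrow> 'a \<Rightarrow> 'a \<Rightarrow> ('a list \<Rightarrow> real) \<Rightarrow> ('a list \<Rightarrow> real) \<Rightarrow> 'a \<Rightarrow> real"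
  where "relative_gain C w a \<beta> x y \<alpha> =
    (\<Sum>t\<in>first C \<beta>. y t * (1 - sigma w t \<alpha>)) - (\<Sum>t\<in>above C \<beta> a. x t * (sigma w t \<beta> - sigma w t \<alpha>))"

lemma lp_feasible_iff:
  "lp_feasible C w N a \<beta> bnd intg x y \<longleftrightarrow>
     (\<forall>\<alpha>\<in>C - {\<beta>}. score C w N \<alpha> - score C w N \<beta> \<le> relative_gain C w a \<beta> x y \<alpha>) \<and>
     (\<Sum>t\<in>first C \<beta>. y t) = (\<Sum>t\<in>above C \<beta> a. x t) \<and>
     (\<forall>t\<in>above C \<beta> a. 0 \<le> x t \<and> x t \<le> real (N t) - bnd) \<and>
     (\<forall>t\<in>first C \<beta>. 0 \<le> y t) \<and>
     (intg \<longrightarrow> (\<forall>t\<in>above C \<beta> a. x t \<in> \<int>) \<and> (\<forall>t\<in>first C \<beta>. y t \<in> \<int>))"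
  by (simp add: lp_feasible_def relative_gain_def)

lemma relative_gain_add:
  "relative_gain C w a \<beta> (\<lambda>t. x t + x' t) (\<lambda>t. y t + y' t) \<alpha> =
     relative_gain C w a \<beta> x y \<alpha> + relative_gain C w a \<beta> x' y' \<alpha>"
  by (simp add: relative_gain_def distrib_right sum.distrib)

lemma lp_value_le_shift:
  assumes "\<And>x y. lp_feasible C w N a \<beta> bnd intg x y \<Longrightarrow> \<exists>x' y'. lp_feasible C w N a \<beta> bnd' intg' x' y'
      \<and> (\<Sum>t\<in>above C \<beta> a. x' t) \<le> (\<Sum>t\<in>above C \<beta> a. x t) + k"
  shows "lp_value C w N a \<beta> bnd' intg' \<le> lp_value C w N a \<beta> bnd intg + ereal k"
proof -
  have "lp_value C w N a \<beta> bnd' intg' - ereal k \<le> lp_value C w N a \<beta> bnd intg"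
    unfolding lp_value_def
  proof (rule Inf_greatest)
    fix z assume "z \<in> {ereal (\<Sum>t\<in>above C \<beta> a. x t) |x y. lp_feasible C w N a \<beta> bnd intg x y}"
    then obtain x y where z: "z = ereal (\<Sum>t\<in>above C \<beta> a. x t)"
      and "lp_feasible C w N a \<beta> bnd intg x y" by blast
    then obtain x' y' where "lp_feasible C w N a \<beta> bnd' intg' x' y'"
      and le: "(\<Sum>t\<in>above C \<beta> a. x' t) \<le> (\<Sum>t\<in>above C \<beta> a. x t) + k"
      using assms by blast
    then have "Inf {ereal (\<Sum>t\<in>above C \<beta> a. x t) |x y. lp_feasible C w N a \<beta> bnd' intg' x y}
        \<le> ereal (\<Sum>t\<in>above C \<beta> a. x' t)"
      by (intro Inf_lower) blast
    also have "\<dots> \<le> z + ereal k"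
      using le z by simp
    finally show "Inf {ereal (\<Sum>t\<in>above C \<beta> a. x t) |x y. lp_feasible C w N a \<beta> bnd' intg' x y} - ereal k \<le> z"
      by (simp add: ereal_minus_le)
  qed
  then show ?thesis
    by (simp add: ereal_minus_le)
qed

definition promote :: "'a \<Rightarrow> 'a list \<Rightarrow> 'a list" where
  "promote b t = map (Transposition.transpose b (hd t)) t"

definition promote_excess :: "'a set \<Rightarrow> 'a \<Rightarrow> 'a \<Rightarrow> ('a list \<Rightarrow> real) \<Rightarrow> 'a list \<Rightarrow> real" where
  "promote_excess C a b x t = (\<Sum>s\<in>{s \<in> above C b a. promote b s = t}. of_int \<lceil>x s\<rceil> - x s)"

lemma promote_excess_nonneg: "0 \<le> promote_excess C a b x t"
  unfolding promote_excess_def by (intro sum_nonneg) linarith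

locale positional_scoring =
  fixes C :: "'a set" and m :: nat and w :: "nat \<Rightarrow> real"
  assumes finite_C: "finite C" and card_C: "card C = m" and three_le_m: "m \<ge> 3"
    and w_1: "w 1 = 1" and w_m: "w m = 0"
    and w_antimono: "\<And>i j. 1 \<le> i \<Longrightarrow> i \<le> j \<Longrightarrow> j \<le> m \<Longrightarrow> w j \<le> w i"
begin

lemma finite_rankings: "finite (rankings C)"
  using finite_C by (simp add: rankings_def)

lemma card_rankings: "card (rankings C) = fact m"
  using finite_C card_C by (simp add: rankings_def)

lemma card_subset_rankings: "S \<subseteq> rankings C \<Longrightarrow> real (card S) \<le> fact m"
  using card_mono[OF finite_rankings] card_rankings by (metis of_nat_fact of_nat_le_iff)

lemma length_ranking: "t \<in> rankings C \<Longrightarrow> length t = m"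
  using card_C by (auto simp: rankings_iff distinct_card[symmetric])

lemma pos_less_m: "t \<in> rankings C \<Longrightarrow> g \<in> C \<Longrightarrow> pos t g < m"
  using nth_pos(1)[of g t] length_ranking by (auto simp: rankings_iff)

lemma sigma_bounds:
  assumes "t \<in> rankings C" and "g \<in> C"
  shows "0 \<le> sigma w t g" and "sigma w t g \<le> 1"
  using pos_less_m[OF assms] w_antimono[of 1 "Suc (pos t g)"] w_antimono[of "Suc (pos t g)" m] w_1 w_m
  by (auto simp: sigma_def)

lemma w_penultimate_bounds: "0 \<le> w (m - 1)" "w (m - 1) \<le> 1"
  using w_antimono[of 1 "m - 1"] w_antimono[of "m - 1" m] w_1 w_m three_le_m by auto

lemma sigma_hd: "t \<in> rankings C \<Longrightarrow> sigma w t (hd t) = 1"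
  using sigma_nth[of t 0 w] length_ranking[of t] three_le_m w_1
  by (cases t) (auto simp: rankings_iff)

lemma distinct_list_without:
  assumes "b \<in> C" and "g \<in> C" and "b \<noteq> g"
  obtains p where "distinct p" and "set p = C - {b, g}" and "length p = m - 2"
proof -
  obtain p where p: "distinct p" "set p = C - {b, g}"
    using finite_distinct_list[of "C - {b, g}"] finite_C by auto
  moreover have "length p = m - 2"
    using distinct_card[OF p(1)] p(2) card_C assms finite_C by (simp add: card_Diff_subset)
  ultimately show ?thesis using that by blast
qed

section \<open>The case \<open>w (m - 1) < 1\<close>\<close>

lemma promote_in_rankings:
  assumes "s \<in> rankings C" and "b \<in> C"
  shows "promote b s \<in> rankings C"
proof -
  have "hd s \<in> C"
    using assms(1) length_ranking[OF assms(1)] three_le_m by (cases s) (auto simp: rankings_iff)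
  then show ?thesis
    using assms by (simp add: rankings_iff promote_def distinct_map inj_on_subset[OF inj_transpose])
qed

lemma pos_promote:
  assumes "s \<in> rankings C" and "b \<in> C" and "g \<in> C"
  shows "pos (promote b s) g = pos s (Transposition.transpose b (hd s) g)"
proof -
  let ?\<tau> = "Transposition.transpose b (hd s)"
  have "?\<tau> g \<in> set s"
    using assms promote_in_rankings[OF assms(1,2)] by (auto simp: rankings_iff promote_def)
  then have "pos (promote b s) (?\<tau> (?\<tau> g)) = pos s (?\<tau> g)"
    unfolding promote_def using assms(1) by (intro pos_map) (auto simp: rankings_iff inj_transpose)
  then show ?thesis by simp
qed

lemma promote_in_first:
  assumes "s \<in> rankings C" and "b \<in> C"
  shows "promote b s \<in> first C b"
proof -
  have "pos s (hd s) = 0"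
    using pos_nth[of s 0] length_ranking[OF assms(1)] three_le_m assms(1)
    by (cases s) (auto simp: rankings_iff)
  then show ?thesis
    using promote_in_rankings[OF assms] pos_promote[OF assms assms(2)] by (simp add: first_def)
qed

lemma promote_gain:
  assumes "s \<in> rankings C" and "b \<in> C" and "g \<in> C" and "g \<noteq> b"
  shows "sigma w s b - sigma w s g \<le> 1 - sigma w (promote b s) g"
proof -
  have promoted: "sigma w (promote b s) g = sigma w s (Transposition.transpose b (hd s) g)"
    using pos_promote[OF assms(1-3)] by (simp add: sigma_def)
  show ?thesis
  proof (cases "g = hd s")
    case True
    then show ?thesis
      using promoted sigma_hd[OF assms(1)] sigma_bounds[OF assms(1,2)] by simp
  next
    case False
    then show ?thesis
      using promoted assms(4) sigma_bounds[OF assms(1,2)] by simp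
  qed
qed

lemma exists_compensating_pair:
  assumes "a \<in> C" and "b \<in> C" and "a \<noteq> b"
  obtains ts ss where "ts \<in> first C b" and "ss \<in> above C b a"
    and "\<And>g. g \<in> C - {b} \<Longrightarrow> 1 - w (m - 1) \<le> (1 - sigma w ts g) - (sigma w ss b - sigma w ss g)"
proof -
  obtain p where p: "distinct p" "set p = C - {b, a}" and len_p: "length p = m - 2"
    using distinct_list_without assms by metis
  define ts where "ts = b # p @ [a]"
  define ss where "ss = p @ [b, a]"
  have ranked: "ts \<in> rankings C" "ss \<in> rankings C"
    using p assms by (auto simp: rankings_iff ts_def ss_def)
  then have "distinct ts" "distinct ss" "length ts = m" "length ss = m"
    by (auto simp: rankings_iff length_ranking)
  note pos_ts = pos_nth[OF \<open>distinct ts\<close>] and pos_ss = pos_nth[OF \<open>distinct ss\<close>]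
  have m_minus: "Suc (length p) = m - 1" "Suc (m - 1) = m" "length p = m - 2"
    using len_p three_le_m by auto
  have ts_b: "pos ts b = 0" and ts_a: "pos ts a = m - 1"
    using pos_ts[of 0] pos_ts[of "Suc (length p)"] \<open>length ts = m\<close> m_minus
    by (simp_all add: ts_def nth_append)
  have ss_b: "pos ss b = m - 2" and ss_a: "pos ss a = m - 1"
    using pos_ss[of "length p"] pos_ss[of "Suc (length p)"] \<open>length ss = m\<close> m_minus
    by (simp_all add: ss_def nth_append)
  have ss_b': "sigma w ss b = w (m - 1)"
    using ss_b m_minus by (simp add: sigma_def)
  show ?thesis
  proof
    show "ts \<in> first C b" "ss \<in> above C b a"
      using ranked ts_b ss_b ss_a three_le_m by (auto simp: first_def above_def)
  next
    fix g assume g: "g \<in> C - {b}"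
    show "1 - w (m - 1) \<le> (1 - sigma w ts g) - (sigma w ss b - sigma w ss g)"
    proof (cases "g = a")
      case True
      then show ?thesis
        using ts_a ss_a ss_b' m_minus w_m by (simp add: sigma_def)
    next
      case False
      with g p have "g \<in> set p" by auto
      then obtain k where k: "k < length p" "g = p ! k"
        by (auto simp: in_set_conv_nth)
      then have "pos ts g = Suc k" "pos ss g = k"
        using pos_ts[of "Suc k"] pos_ss[of k] \<open>length ts = m\<close> \<open>length ss = m\<close> m_minus
        by (simp_all add: ts_def ss_def nth_append)
      moreover have "w (Suc (Suc k)) \<le> w (Suc k)"
        using w_antimono[of "Suc k" "Suc (Suc k)"] k m_minus by simp
      ultimately show ?thesis
        using ss_b' by (simp add: sigma_def)
    qed
  qed
qed

lemma promote_image: "b \<in> C \<Longrightarrow> promote b ` above C b a \<subseteq> first C b"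
  using promote_in_first by (auto simp: above_def)

lemma sum_over_promote:
  fixes \<delta> f :: "'a list \<Rightarrow> real"
  assumes "b \<in> C"
  shows "(\<Sum>t\<in>first C b. (\<Sum>s\<in>{s \<in> above C b a. promote b s = t}. \<delta> s) * f t)
           = (\<Sum>s\<in>above C b a. \<delta> s * f (promote b s))"
proof -
  have "finite (above C b a)" "finite (first C b)"
    using finite_rankings by (auto simp: above_def first_def)
  have "(\<Sum>t\<in>first C b. (\<Sum>s\<in>{s \<in> above C b a. promote b s = t}. \<delta> s) * f t)
      = (\<Sum>t\<in>first C b. \<Sum>s\<in>{s \<in> above C b a. promote b s = t}. \<delta> s * f (promote b s))"
    unfolding sum_distrib_right by (intro sum.cong refl) auto
  also have "\<dots> = (\<Sum>s\<in>above C b a. \<delta> s * f (promote b s))"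
    by (rule sum.group[OF \<open>finite (above C b a)\<close> \<open>finite (first C b)\<close> promote_image[OF assms]])
  finally show ?thesis .
qed

lemma sum_promote_excess:
  "b \<in> C \<Longrightarrow> (\<Sum>t\<in>first C b. promote_excess C a b x t) = (\<Sum>s\<in>above C b a. of_int \<lceil>x s\<rceil> - x s)"
  using sum_over_promote[where \<delta> = "\<lambda>s. of_int \<lceil>x s\<rceil> - x s" and f = "\<lambda>_. 1"]
  by (simp add: promote_excess_def)

lemma relative_gain_ceiling:
  assumes "b \<in> C" and "\<alpha> \<in> C - {b}"
  shows "relative_gain C w a b x y \<alpha>
    \<le> relative_gain C w a b (\<lambda>s. \<lceil>x s\<rceil>) (\<lambda>t. y t + promote_excess C a b x t) \<alpha>"
proof -
  define \<delta> where "\<delta> s = of_int \<lceil>x s\<rceil> - x s" for s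
  have "relative_gain C w a b \<delta> (promote_excess C a b x) \<alpha>
      = (\<Sum>s\<in>above C b a. \<delta> s * ((1 - sigma w (promote b s) \<alpha>) - (sigma w s b - sigma w s \<alpha>)))"
    unfolding relative_gain_def promote_excess_def \<delta>_def[symmetric]
      sum_over_promote[OF assms(1), where f = "\<lambda>t. 1 - sigma w t \<alpha>"]
    by (simp add: sum_subtractf[symmetric] right_diff_distrib)
  also have "\<dots> \<ge> 0"
    using assms promote_gain by (intro sum_nonneg mult_nonneg_nonneg) (auto simp: above_def \<delta>_def)
  finally have "0 \<le> relative_gain C w a b \<delta> (promote_excess C a b x) \<alpha>" .
  moreover have "(\<lambda>s. real_of_int \<lceil>x s\<rceil>) = (\<lambda>s. x s + \<delta> s)"
    by (simp add: \<delta>_def)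
  ultimately show ?thesis
    by (simp add: relative_gain_add)
qed

lemma relative_gain_compensation:
  assumes ts: "ts \<in> first C b" and ss: "ss \<in> above C b a" and \<alpha>: "\<alpha> \<in> C - {b}"
    and gap: "1 - w (m - 1) \<le> (1 - sigma w ts \<alpha>) - (sigma w ss b - sigma w ss \<alpha>)"
    and z_nonneg: "\<And>t. t \<in> first C b \<Longrightarrow> 0 \<le> z t" and z_sum: "(\<Sum>t\<in>first C b. z t) \<le> r"
    and "0 \<le> r" and "0 \<le> B" and r_le: "r \<le> B * (1 - w (m - 1))"
  shows "0 \<le> relative_gain C w a b (\<lambda>s. if s = ss then B else 0)
                (\<lambda>t. (if t = ts then r + B else 0) - z t) \<alpha>"
proof -
  let ?f = "\<lambda>t. 1 - sigma w t \<alpha>"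
  have fin: "finite (first C b)" "finite (above C b a)"
    using finite_rankings by (auto simp: above_def first_def)
  have "(\<Sum>t\<in>first C b. z t * ?f t) \<le> (\<Sum>t\<in>first C b. z t)"
    using \<alpha> z_nonneg sigma_bounds(1) by (intro sum_mono) (auto simp: first_def mult_left_le)
  moreover have "r \<le> B * ((1 - sigma w ts \<alpha>) - (sigma w ss b - sigma w ss \<alpha>))"
    using r_le gap \<open>0 \<le> B\<close> by (meson mult_left_mono order_trans)
  moreover have "0 \<le> r * ?f ts"
    using \<open>0 \<le> r\<close> sigma_bounds(2)[of ts \<alpha>] ts \<alpha> by (simp add: first_def)
  moreover have "relative_gain C w a b (\<lambda>s. if s = ss then B else 0) (\<lambda>t. (if t = ts then r + B else 0) - z t) \<alpha>
      = (r + B) * ?f ts - (\<Sum>t\<in>first C b. z t * ?f t) - B * (sigma w ss b - sigma w ss \<alpha>)"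
    using ts ss fin by (simp add: relative_gain_def left_diff_distrib sum_subtractf sum_point_mass)
  ultimately show ?thesis
    using z_sum by (simp add: algebra_simps)
qed

lemma round_down_compensated:
  fixes x y :: "'a list \<Rightarrow> real"
  assumes "a \<in> C" and "b \<in> C" and "a \<noteq> b" and w_less: "w (m - 1) < 1"
    and x_int: "\<And>s. s \<in> above C b a \<Longrightarrow> x s \<in> \<int>"
    and y_nonneg: "\<And>t. t \<in> first C b \<Longrightarrow> 0 \<le> y t"
    and balance: "(\<Sum>t\<in>first C b. y t) = (\<Sum>s\<in>above C b a. x s)"
  obtains ss :: "'a list" and B :: nat and y' :: "'a list \<Rightarrow> real" where "ss \<in> above C b a"
    and "real B \<le> fact m / (1 - w (m - 1))"
    and "\<And>t. t \<in> first C b \<Longrightarrow> 0 \<le> y' t \<and> y' t \<in> \<int>"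
    and "(\<Sum>t\<in>first C b. y' t) = (\<Sum>s\<in>above C b a. x s) + real B"
    and "\<And>\<alpha>. \<alpha> \<in> C - {b} \<Longrightarrow> relative_gain C w a b x y \<alpha>
           \<le> relative_gain C w a b (\<lambda>s. x s + (if s = ss then real B else 0)) y' \<alpha>"
proof -
  obtain ts ss where ts: "ts \<in> first C b" and ss: "ss \<in> above C b a"
    and gap: "\<And>g. g \<in> C - {b} \<Longrightarrow> 1 - w (m - 1) \<le> (1 - sigma w ts g) - (sigma w ss b - sigma w ss g)"
    using exists_compensating_pair assms(1-3) by metis
  have fin: "finite (first C b)" "finite (above C b a)"
    using finite_rankings by (auto simp: above_def first_def)
  define frac where "frac t = y t - \<lfloor>y t\<rfloor>" for t
  define r where "r = (\<Sum>t\<in>first C b. frac t)"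
  have frac_nonneg: "0 \<le> frac t" for t
    by (simp add: frac_def)
  then have r_nonneg: "0 \<le> r"
    by (simp add: r_def sum_nonneg)
  have sum_y_int: "(\<Sum>t\<in>first C b. y t) \<in> \<int>"
    using x_int by (simp add: balance Ints_sum)
  note r_bounds = sum_frac_bounds[OF fin(1) _ sum_y_int, folded frac_def r_def]
  have r_int: "r \<in> \<int>" and "r \<le> real (card (first C b)) - 1"
    using r_bounds ts by auto
  with card_subset_rankings[of "first C b"] have r_le: "r \<le> fact m - 1"
    by (auto simp: first_def)
  define B where "B = nat \<lceil>r / (1 - w (m - 1))\<rceil>"
  have B_bounds: "r \<le> real B * (1 - w (m - 1))" "real B \<le> fact m / (1 - w (m - 1))"
    using nat_ceiling_div_bounds[OF r_nonneg r_le] w_less w_penultimate_bounds by (auto simp: B_def)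
  define y' where "y' t = \<lfloor>y t\<rfloor> + (if t = ts then r + B else 0)" for t
  show thesis
  proof (rule that[of ss B y'])
    show "ss \<in> above C b a" "real B \<le> fact m / (1 - w (m - 1))"
      by (fact ss B_bounds(2))+
    show "0 \<le> y' t \<and> y' t \<in> \<int>" if "t \<in> first C b" for t
      using y_nonneg[OF that] r_nonneg r_int by (auto simp: y'_def)
    show "(\<Sum>t\<in>first C b. y' t) = (\<Sum>s\<in>above C b a. x s) + B"
      using balance ts fin by (simp add: y'_def sum.distrib r_def frac_def sum_subtractf)
  next
    fix \<alpha> assume \<alpha>: "\<alpha> \<in> C - {b}"
    have "0 \<le> relative_gain C w a b (\<lambda>s. if s = ss then real B else 0)
        (\<lambda>t. (if t = ts then r + B else 0) - frac t) \<alpha>"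
      using ts ss \<alpha> gap[OF \<alpha>] frac_nonneg r_nonneg B_bounds(1)
      by (intro relative_gain_compensation) (auto simp: r_def)
    moreover have "y' = (\<lambda>t. y t + ((if t = ts then r + B else 0) - frac t))"
      by (auto simp: y'_def frac_def)
    ultimately show "relative_gain C w a b x y \<alpha>
           \<le> relative_gain C w a b (\<lambda>s. x s + (if s = ss then real B else 0)) y' \<alpha>"
      by (simp add: relative_gain_add)
  qed
qed

lemma round_integral_w_less_1:
  fixes x y :: "'a list \<Rightarrow> real"
  assumes "a \<in> C" and "b \<in> C" and "a \<noteq> b" and "w (m - 1) < 1"
    and y_nonneg: "\<And>t. t \<in> first C b \<Longrightarrow> 0 \<le> y t"
    and balance: "(\<Sum>t\<in>first C b. y t) = (\<Sum>s\<in>above C b a. x s)"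
  obtains ss :: "'a list" and B :: nat and y' :: "'a list \<Rightarrow> real" where "ss \<in> above C b a"
    and "real B \<le> fact m / (1 - w (m - 1))"
    and "\<And>t. t \<in> first C b \<Longrightarrow> 0 \<le> y' t \<and> y' t \<in> \<int>"
    and "(\<Sum>t\<in>first C b. y' t) = (\<Sum>s\<in>above C b a. real_of_int \<lceil>x s\<rceil>) + real B"
    and "\<And>\<alpha>. \<alpha> \<in> C - {b} \<Longrightarrow> relative_gain C w a b x y \<alpha>
           \<le> relative_gain C w a b (\<lambda>s. \<lceil>x s\<rceil> + (if s = ss then real B else 0)) y' \<alpha>"
proof -
  define y1 where "y1 t = y t + promote_excess C a b x t" for t
  have y1_nonneg: "0 \<le> y1 t" if "t \<in> first C b" for t
    using y_nonneg[OF that] promote_excess_nonneg[of C a b x t] by (simp add: y1_def)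
  have balance1: "(\<Sum>t\<in>first C b. y1 t) = (\<Sum>s\<in>above C b a. real_of_int \<lceil>x s\<rceil>)"
    using balance sum_promote_excess[OF assms(2)] by (simp add: y1_def sum.distrib sum_subtractf)
  have ceiling_int: "\<And>s. s \<in> above C b a \<Longrightarrow> real_of_int \<lceil>x s\<rceil> \<in> \<int>"
    by simp
  show thesis
  proof (rule round_down_compensated[OF assms(1-4) ceiling_int y1_nonneg balance1])
    fix ss :: "'a list" and B :: nat and y' :: "'a list \<Rightarrow> real"
    assume "ss \<in> above C b a" and "real B \<le> fact m / (1 - w (m - 1))"
      and "\<And>t. t \<in> first C b \<Longrightarrow> 0 \<le> y' t \<and> y' t \<in> \<int>"
      and "(\<Sum>t\<in>first C b. y' t) = (\<Sum>s\<in>above C b a. real_of_int \<lceil>x s\<rceil>) + real B"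
      and "\<And>\<alpha>. \<alpha> \<in> C - {b} \<Longrightarrow> relative_gain C w a b (\<lambda>s. \<lceil>x s\<rceil>) y1 \<alpha>
           \<le> relative_gain C w a b (\<lambda>s. \<lceil>x s\<rceil> + (if s = ss then real B else 0)) y' \<alpha>"
    then show thesis
      using relative_gain_ceiling[OF assms(2)] unfolding y1_def
      by (intro that[of ss B y']) (blast intro: order_trans)+
  qed
qed

lemma Kconst_less_1: "w (m - 1) < 1 \<Longrightarrow> Kconst m w = 2 * (fact m / (1 - w (m - 1)))"
  by (simp add: Kconst_def)

lemma feasible_rounding_w_less_1:
  fixes x y :: "'a list \<Rightarrow> real"
  assumes "a \<in> C" and "b \<in> C" and "a \<noteq> b" and w_less: "w (m - 1) < 1"
    and feasible: "lp_feasible C w N a b (Kconst m w) False x y"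
  obtains x' y' where "lp_feasible C w N a b 0 True x' y'"
    and "(\<Sum>t\<in>above C b a. x' t) \<le> (\<Sum>t\<in>above C b a. x t) + Kconst m w"
proof -
  define D where "D = fact m / (1 - w (m - 1))"
  have D_ge: "fact m \<le> D"
    using w_less w_penultimate_bounds by (simp add: D_def field_simps)
  have K_eq: "Kconst m w = 2 * D"
    using w_less by (simp add: D_def Kconst_less_1)
  from feasible have score_le: "\<And>\<alpha>. \<alpha> \<in> C - {b} \<Longrightarrow>
      score C w N \<alpha> - score C w N b \<le> relative_gain C w a b x y \<alpha>"
    and balance: "(\<Sum>t\<in>first C b. y t) = (\<Sum>s\<in>above C b a. x s)"
    and x_bounds: "\<And>s. s \<in> above C b a \<Longrightarrow> 0 \<le> x s \<and> x s \<le> real (N s) - Kconst m w"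
    and y_nonneg: "\<And>t. t \<in> first C b \<Longrightarrow> 0 \<le> y t"
    by (auto simp: lp_feasible_iff)
  obtain ss B y' where ss: "ss \<in> above C b a" and B_le: "real B \<le> D"
    and y'_int: "\<And>t. t \<in> first C b \<Longrightarrow> 0 \<le> y' t \<and> y' t \<in> \<int>"
    and y'_sum: "(\<Sum>t\<in>first C b. y' t) = (\<Sum>s\<in>above C b a. real_of_int \<lceil>x s\<rceil>) + real B"
    and y'_gain: "\<And>\<alpha>. \<alpha> \<in> C - {b} \<Longrightarrow> relative_gain C w a b x y \<alpha>
           \<le> relative_gain C w a b (\<lambda>s. \<lceil>x s\<rceil> + (if s = ss then real B else 0)) y' \<alpha>"
    using round_integral_w_less_1[OF assms(1-4) y_nonneg balance] unfolding D_def by blast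
  define x' where "x' s = \<lceil>x s\<rceil> + (if s = ss then real B else 0)" for s
  have "finite (above C b a)"
    using finite_rankings by (simp add: above_def)
  then have x'_sum: "(\<Sum>s\<in>above C b a. x' s) = (\<Sum>s\<in>above C b a. real_of_int \<lceil>x s\<rceil>) + real B"
    using sum_point_mass[OF _ ss, of "real B" "\<lambda>_. 1"] by (simp add: x'_def sum.distrib)
  show thesis
  proof (rule that[of x' y'])
    show "lp_feasible C w N a b 0 True x' y'"
      unfolding lp_feasible_iff
    proof (intro conjI ballI impI)
      fix \<alpha> assume "\<alpha> \<in> C - {b}"
      then show "score C w N \<alpha> - score C w N b \<le> relative_gain C w a b x' y' \<alpha>"
        using score_le y'_gain unfolding x'_def by (meson order_trans)
    next
      show "(\<Sum>t\<in>first C b. y' t) = (\<Sum>s\<in>above C b a. x' s)"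
        using x'_sum y'_sum by simp
    next
      fix s assume s: "s \<in> above C b a"
      show "0 \<le> x' s"
        using x_bounds[OF s] by (simp add: x'_def add_nonneg_nonneg)
      show "x' s \<le> real (N s) - 0"
        using of_int_ceiling_add_le[of "x s" B "N s"] of_int_ceiling_add_le[of "x s" 0 "N s"]
          x_bounds[OF s] B_le D_ge K_eq by (auto simp: x'_def)
      show "x' s \<in> \<int>"
        by (simp add: x'_def)
    qed (use y'_int in auto)
    have "(\<Sum>s\<in>above C b a. of_int \<lceil>x s\<rceil> - x s) \<le> (\<Sum>s\<in>above C b a. 1)"
      by (intro sum_mono) linarith
    also have "\<dots> \<le> fact m"
      using card_subset_rankings[of "above C b a"] by (simp add: above_def)
    finally show "(\<Sum>s\<in>above C b a. x' s) \<le> (\<Sum>s\<in>above C b a. x s) + Kconst m w"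
      using x'_sum B_le D_ge K_eq by (simp add: sum_subtractf)
  qed
qed

section \<open>The case \<open>w (m - 1) = 1\<close>\<close>

lemma Kconst_eq_1: "w (m - 1) = 1 \<Longrightarrow> Kconst m w = 0"
  by (simp add: Kconst_def)

lemma last_ranking: "t \<in> rankings C \<Longrightarrow> last t \<in> C \<and> last t = t ! (m - 1) \<and> pos t (last t) = m - 1"
  using length_ranking[of t] three_le_m pos_nth[of t "m - 1"]
  by (cases "t = []") (auto simp: rankings_iff last_conv_nth)

lemma sigma_w_eq_1:
  assumes w_pen: "w (m - 1) = 1" and t: "t \<in> rankings C" and g: "g \<in> C"
  shows "sigma w t g = (if g = last t then 0 else 1)"
proof (cases "pos t g = m - 1")
  case True
  then have "g = last t"
    using nth_pos(2)[of g t] last_ranking[OF t] t g by (simp add: rankings_iff)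
  with True show ?thesis
    using w_m three_le_m by (simp add: sigma_def)
next
  case False
  then have "g \<noteq> last t"
    using last_ranking[OF t] by auto
  moreover have "w (Suc (pos t g)) = 1"
    using w_antimono[of 1 "Suc (pos t g)"] w_antimono[of "Suc (pos t g)" "m - 1"]
      False pos_less_m[OF t g] w_1 w_pen by auto
  ultimately show ?thesis
    by (simp add: sigma_def)
qed

lemma last_ne_of_first_or_above:
  assumes "a \<in> C" and "t \<in> first C b \<union> above C b a"
  shows "last t \<noteq> b"
proof
  assume "last t = b"
  with assms have "pos t b = m - 1" "pos t a < m"
    using last_ranking pos_less_m by (auto simp: first_def above_def)
  with assms(2) three_le_m show False
    by (auto simp: first_def above_def)
qed

lemma relative_gain_w_eq_1:
  assumes w_pen: "w (m - 1) = 1" and "a \<in> C" and "b \<in> C" and g: "g \<in> C - {b}"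
  shows "relative_gain C w a b x y g
    = (\<Sum>t\<in>{t \<in> first C b. last t = g}. y t) - (\<Sum>t\<in>{t \<in> above C b a. last t = g}. x t)"
proof -
  have fin: "finite (first C b)" "finite (above C b a)"
    using finite_rankings by (auto simp: above_def first_def)
  have "(\<Sum>t\<in>first C b. y t * (1 - sigma w t g)) = (\<Sum>t\<in>first C b. if last t = g then y t else 0)"
    using sigma_w_eq_1[OF w_pen _ DiffD1[OF g]] by (intro sum.cong) (auto simp: first_def)
  moreover have "(\<Sum>t\<in>above C b a. x t * (sigma w t b - sigma w t g))
      = (\<Sum>t\<in>above C b a. if last t = g then x t else 0)"
    using sigma_w_eq_1[OF w_pen _ DiffD1[OF g]] sigma_w_eq_1[OF w_pen _ \<open>b \<in> C\<close>]
      last_ne_of_first_or_above[OF \<open>a \<in> C\<close>] by (intro sum.cong) (auto simp: above_def)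
  ultimately show ?thesis
    by (simp add: relative_gain_def sum.inter_filter[OF fin(1)] sum.inter_filter[OF fin(2)])
qed

lemma score_in_Ints_w_eq_1: "w (m - 1) = 1 \<Longrightarrow> g \<in> C \<Longrightarrow> score C w N g \<in> \<int>"
  unfolding score_def using sigma_w_eq_1 by (intro Ints_sum) (simp add: rankings_def)

lemma exists_first_with_last:
  assumes "b \<in> C" and "g \<in> C - {b}"
  shows "\<exists>t\<in>first C b. last t = g"
proof -
  obtain p where p: "distinct p" "set p = C - {b, g}"
    using distinct_list_without assms by blast
  define t where "t = b # p @ [g]"
  have "t \<in> rankings C"
    using p assms by (auto simp: rankings_iff t_def)
  moreover have "pos t b = 0"
    using pos_nth[of t 0] \<open>t \<in> rankings C\<close> by (simp add: rankings_iff t_def)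
  ultimately show ?thesis
    by (auto simp: first_def t_def)
qed

lemma sum_group_last:
  assumes "a \<in> C" and "S = first C b \<or> S = above C b a"
  shows "(\<Sum>t\<in>S. z t) = (\<Sum>g\<in>C - {b}. \<Sum>t\<in>{t \<in> S. last t = g}. z t)"
proof -
  have "finite S" "finite (C - {b})"
    using assms(2) finite_rankings finite_C by (auto simp: above_def first_def)
  moreover have "last t \<in> C - {b}" if "t \<in> S" for t
  proof -
    have "t \<in> rankings C" "t \<in> first C b \<union> above C b a"
      using assms(2) that by (auto simp: first_def above_def)
    then show ?thesis
      using last_ranking last_ne_of_first_or_above[OF assms(1)] by blast
  qed
  then have "last ` S \<subseteq> C - {b}"
    by blast
  ultimately show ?thesis
    by (rule sum.group[symmetric])
qed

lemma integral_quotas_w_eq_1: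
  fixes x y :: "'a list \<Rightarrow> real"
  assumes "a \<in> C" and "b \<in> C" and w_pen: "w (m - 1) = 1"
    and feasible: "lp_feasible C w N a b (Kconst m w) False x y"
  obtains v e :: "'a \<Rightarrow> nat"
  where "\<And>g. g \<in> C - {b} \<Longrightarrow> v g \<le> (\<Sum>t\<in>{t \<in> above C b a. last t = g}. N t)"
    and "\<And>g. g \<in> C - {b} \<Longrightarrow> score C w N g - score C w N b \<le> real (e g) - real (v g)"
    and "(\<Sum>g\<in>C - {b}. v g) = (\<Sum>g\<in>C - {b}. e g)"
    and "(\<Sum>g\<in>C - {b}. real (v g)) \<le> (\<Sum>t\<in>above C b a. x t)"
proof -
  define Ag where "Ag g = {t \<in> above C b a. last t = g}" for g
  define Fg where "Fg g = {t \<in> first C b. last t = g}" for g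
  from feasible have score_le: "\<And>g. g \<in> C - {b} \<Longrightarrow>
      score C w N g - score C w N b \<le> (\<Sum>t\<in>Fg g. y t) - (\<Sum>t\<in>Ag g. x t)"
    and balance: "(\<Sum>t\<in>first C b. y t) = (\<Sum>s\<in>above C b a. x s)"
    and x_bounds: "\<And>s. s \<in> above C b a \<Longrightarrow> 0 \<le> x s \<and> x s \<le> real (N s)"
    and y_nonneg: "\<And>t. t \<in> first C b \<Longrightarrow> 0 \<le> y t"
    by (auto simp: lp_feasible_iff Kconst_eq_1[OF w_pen] relative_gain_w_eq_1[OF w_pen assms(1,2)]
        Ag_def Fg_def)
  define d where "d g = \<lfloor>score C w N g - score C w N b\<rfloor>" for g
  have d_eq: "real_of_int (d g) = score C w N g - score C w N b" if "g \<in> C - {b}" for g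
    using score_in_Ints_w_eq_1[OF w_pen, of g N] score_in_Ints_w_eq_1[OF w_pen \<open>b \<in> C\<close>, of N] that
    by (auto simp: d_def)
  have "finite (C - {b})"
    using finite_C by simp
  then obtain v where v_le: "\<And>g. g \<in> C - {b} \<Longrightarrow> v g \<le> (\<Sum>t\<in>Ag g. N t) \<and> v g \<le> nat (- d g)"
    and v_sum: "(\<Sum>g\<in>C - {b}. v g) = (\<Sum>g\<in>C - {b}. nat (d g))"
    and v_le_x: "(\<Sum>g\<in>C - {b}. real (v g)) \<le> (\<Sum>g\<in>C - {b}. \<Sum>t\<in>Ag g. x t)"
  proof (rule integral_cover_split[of "C - {b}" "\<lambda>g. \<Sum>t\<in>Ag g. x t" "\<lambda>g. \<Sum>t\<in>Ag g. N t"
        "\<lambda>g. \<Sum>t\<in>Fg g. y t" d])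
    fix g assume "g \<in> C - {b}"
    show "0 \<le> (\<Sum>t\<in>Ag g. x t) \<and> (\<Sum>t\<in>Ag g. x t) \<le> real (\<Sum>t\<in>Ag g. N t) \<and>
        0 \<le> (\<Sum>t\<in>Fg g. y t) \<and> real_of_int (d g) \<le> (\<Sum>t\<in>Fg g. y t) - (\<Sum>t\<in>Ag g. x t)"
      using x_bounds y_nonneg score_le[OF \<open>g \<in> C - {b}\<close>] d_eq[OF \<open>g \<in> C - {b}\<close>]
      by (auto simp: Ag_def Fg_def of_nat_sum intro!: sum_nonneg sum_mono)
  next
    show "(\<Sum>g\<in>C - {b}. \<Sum>t\<in>Fg g. y t) \<le> (\<Sum>g\<in>C - {b}. \<Sum>t\<in>Ag g. x t)"
      using balance sum_group_last[OF \<open>a \<in> C\<close>, of "first C b" b y]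
        sum_group_last[OF \<open>a \<in> C\<close>, of "above C b a" b x] by (simp add: Ag_def Fg_def)
  qed (use that in blast)+
  show thesis
  proof (rule that[of v "\<lambda>g. nat (d g)"])
    show "score C w N g - score C w N b \<le> real (nat (d g)) - real (v g)" if "g \<in> C - {b}" for g
      using v_le[OF that] d_eq[OF that] by linarith
    show "(\<Sum>g\<in>C - {b}. real (v g)) \<le> (\<Sum>t\<in>above C b a. x t)"
      using v_le_x sum_group_last[OF \<open>a \<in> C\<close>, of "above C b a" b x] by (simp add: Ag_def)
  qed (use v_le v_sum in \<open>auto simp: Ag_def\<close>)
qed

lemma feasible_rounding_w_eq_1:
  fixes x y :: "'a list \<Rightarrow> real"
  assumes "a \<in> C" and "b \<in> C" and w_pen: "w (m - 1) = 1"
    and feasible: "lp_feasible C w N a b (Kconst m w) False x y"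
  obtains x' y' where "lp_feasible C w N a b 0 True x' y'"
    and "(\<Sum>t\<in>above C b a. x' t) \<le> (\<Sum>t\<in>above C b a. x t) + Kconst m w"
proof -
  define Ag where "Ag g = {t \<in> above C b a. last t = g}" for g
  define Fg where "Fg g = {t \<in> first C b. last t = g}" for g
  obtain v e :: "'a \<Rightarrow> nat" where v_le: "\<And>g. g \<in> C - {b} \<Longrightarrow> v g \<le> (\<Sum>t\<in>Ag g. N t)"
    and score_le: "\<And>g. g \<in> C - {b} \<Longrightarrow> score C w N g - score C w N b \<le> real (e g) - real (v g)"
    and v_sum: "(\<Sum>g\<in>C - {b}. v g) = (\<Sum>g\<in>C - {b}. e g)"
    and v_le_x: "(\<Sum>g\<in>C - {b}. real (v g)) \<le> (\<Sum>t\<in>above C b a. x t)"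
    using integral_quotas_w_eq_1[OF assms] unfolding Ag_def by blast
  have "finite (above C b a)"
    using finite_rankings by (simp add: above_def)
  then obtain u where u_le: "\<And>t. t \<in> above C b a \<Longrightarrow> u t \<le> N t"
    and u_sum: "\<And>g. g \<in> C - {b} \<Longrightarrow> (\<Sum>t\<in>Ag g. u t) = v g"
    using bounded_nat_split_grouped v_le unfolding Ag_def by blast
  have "\<forall>g\<in>C - {b}. \<exists>t. t \<in> Fg g"
    using exists_first_with_last[OF \<open>b \<in> C\<close>] by (auto simp: Fg_def)
  then obtain top where top: "\<And>g. g \<in> C - {b} \<Longrightarrow> top g \<in> Fg g"
    by (metis bchoice)
  define x' where "x' t = real (u t)" for t
  define y' where "y' t = (if t = top (last t) then real (e (last t)) else 0)" for t
  have sum_y': "(\<Sum>t\<in>Fg g. y' t) = real (e g)" if "g \<in> C - {b}" for g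
  proof -
    have "(\<Sum>t\<in>Fg g. y' t) = (\<Sum>t\<in>Fg g. if t = top g then real (e g) else 0)"
      by (intro sum.cong) (auto simp: y'_def Fg_def)
    moreover have "finite (Fg g)"
      using finite_rankings by (simp add: Fg_def first_def)
    ultimately show ?thesis
      using top[OF that] by simp
  qed
  have sum_x': "(\<Sum>t\<in>Ag g. x' t) = real (v g)" if "g \<in> C - {b}" for g
    unfolding x'_def u_sum[OF that, symmetric] by simp
  show thesis
  proof (rule that[of x' y'])
    show "lp_feasible C w N a b 0 True x' y'"
      unfolding lp_feasible_iff
    proof (intro conjI ballI impI)
      fix g assume "g \<in> C - {b}"
      then show "score C w N g - score C w N b \<le> relative_gain C w a b x' y' g"
        using score_le sum_x' sum_y'
        by (simp add: relative_gain_w_eq_1[OF w_pen assms(1,2)] Ag_def Fg_def)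
    next
      have "(\<Sum>t\<in>first C b. y' t) = (\<Sum>g\<in>C - {b}. real (e g))"
        using sum_group_last[OF \<open>a \<in> C\<close>, of "first C b" b y'] sum_y' by (simp add: Fg_def)
      also have "\<dots> = (\<Sum>g\<in>C - {b}. real (v g))"
        by (simp add: v_sum flip: of_nat_sum)
      also have "\<dots> = (\<Sum>t\<in>above C b a. x' t)"
        using sum_group_last[OF \<open>a \<in> C\<close>, of "above C b a" b x'] sum_x' by (simp add: Ag_def)
      finally show "(\<Sum>t\<in>first C b. y' t) = (\<Sum>t\<in>above C b a. x' t)" .
    qed (use u_le in \<open>auto simp: x'_def y'_def\<close>)
    show "(\<Sum>t\<in>above C b a. x' t) \<le> (\<Sum>t\<in>above C b a. x t) + Kconst m w"
      using sum_group_last[OF \<open>a \<in> C\<close>, of "above C b a" b x'] sum_x' v_le_x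
      by (simp add: Ag_def Kconst_eq_1[OF w_pen])
  qed
qed

lemma Q1_le_Q2_plus_Kconst:
  assumes "a \<in> C" and "b \<in> C" and "a \<noteq> b"
  shows "Q1 C w N a b \<le> Q2 C w N (Kconst m w) a b + ereal (Kconst m w)"
  unfolding Q1_def Q2_def
proof (rule lp_value_le_shift)
  fix x y assume feasible: "lp_feasible C w N a b (Kconst m w) False x y"
  consider "w (m - 1) < 1" | "w (m - 1) = 1"
    using w_penultimate_bounds by linarith
  then show "\<exists>x' y'. lp_feasible C w N a b 0 True x' y'
      \<and> (\<Sum>t\<in>above C b a. x' t) \<le> (\<Sum>t\<in>above C b a. x t) + Kconst m w"
  proof cases
    case 1
    show ?thesis
      by (rule feasible_rounding_w_less_1[OF assms 1 feasible]) blast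
  next
    case 2
    show ?thesis
      by (rule feasible_rounding_w_eq_1[OF assms(1,2) 2 feasible]) blast
  qed
qed

end

theorem proposition5:
  fixes C :: "'a set" and m n :: nat and w :: "nat \<Rightarrow> real"
  assumes "finite C" and "card C = m" and "m \<ge> 3"
    and "w 1 = 1" and "w m = 0"
    and "\<And>i j. 1 \<le> i \<Longrightarrow> i \<le> j \<Longrightarrow> j \<le> m \<Longrightarrow> w j \<le> w i"
  shows "AE prof in measure_pmf (IC_profile C n).
           \<forall>a\<in>C. (\<forall>\<alpha>\<in>C - {a}. score C w (type_count n prof) \<alpha> < score C w (type_count n prof) a)
             \<longrightarrow> (\<forall>\<beta>\<in>C - {a}.
                   Q1 C w (type_count n prof) a \<beta>
                     \<le> Q2 C w (type_count n prof) (Kconst m w) a \<beta> + ereal (Kconst m w))"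
proof (rule AE_I2, intro ballI impI)
  interpret positional_scoring C m w
    using assms by unfold_locales
  fix prof a \<beta> assume "a \<in> C" and "\<beta> \<in> C - {a}"
  then show "Q1 C w (type_count n prof) a \<beta>
      \<le> Q2 C w (type_count n prof) (Kconst m w) a \<beta> + ereal (Kconst m w)"
    by (intro Q1_le_Q2_plus_Kconst) auto
qed

end
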